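(* Let $\lambda\geq\kappa$ be regular infinite cardinals. Let $\mathcal{L}$ be a distributive lattice which, regarded as a (poset) category, is $(\lambda,\kappa)$-coherent, and let $(A_i)_{i<\kappa}$ be a collection of subsets of $\mathcal{L}$, each of cardinality $<\lambda$. Then there is a set $X$ and an injective order-preserving map $\mathcal{L}\hookrightarrow\mathcal{P}(X)$ into the power set Boolean algebra which preserves all meets of fewer than $\kappa$ elements and which, for each $i<\kappa$, preserves the join $\bigcup A_i$.
   Context: A category $\mathcal{C}$ is $(\lambda,\kappa)$-coherent if: (i) it has all limits of diagrams with fewer than $\kappa$ morphisms; (ii) it has pullback-stable effective epi–mono factorizations; (iii) it has pullback-stable unions of fewer than $\lambda$ subobjects; (iv) for every rooted cotree in $\mathcal{C}$ (a diagram indexed by the opposite of a rooted tree, with arrows from the immediate successors of each node into it) such that at each node having immediate successors these form an extremal epimorphic family with fewer than $\lambda$ members, every branch has length $<\kappa$, and every branch is continuous (objects at limit positions are limits of the preceding objects), the family of transfinite cocompositions of the branches (limit of the branch with its map to the root) is extremal epimorphic on the root. A family $(f_i:x_i\to y)$ is extremal epimorphic if it does not factor through any proper subobject of $y$. *)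

theory Defs
  imports Main
begin

unbundle cardinal_syntax

text \<open>A distributive lattice regarded as a poset category: objects are the
elements, there is an arrow x \<rightarrow> y iff x \<le> y.  Cardinals are represented
as cardinal orders (BNF_Cardinal_Order_Relation); "fewer than kap" is
ordLess of the cardinality.\<close>

definition is_glb :: "'a::order set \<Rightarrow> 'a \<Rightarrow> bool" where
  "is_glb S m \<longleftrightarrow> (\<forall>s\<in>S. m \<le> s) \<and> (\<forall>y. (\<forall>s\<in>S. y \<le> s) \<longrightarrow> y \<le> m)"

definition is_lub :: "'a::order set \<Rightarrow> 'a \<Rightarrow> bool" where
  "is_lub S j \<longleftrightarrow> (\<forall>s\<in>S. s \<le> j) \<and> (\<forall>y. (\<forall>s\<in>S. s \<le> y) \<longrightarrow> j \<le> y)"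

text \<open>In a poset the limit
of a diagram is the greatest lower bound of the objects in its image, and a set
of objects of size < kap (kap infinite) is the image of a discrete diagram with
fewer than kap morphisms (and conversely).\<close>
definition has_small_limits :: "'k rel \<Rightarrow> 'a::distrib_lattice itself \<Rightarrow> bool" where
  "has_small_limits kap _ \<longleftrightarrow> (\<forall>S::'a set. |S| <o kap \<longrightarrow> (\<exists>m. is_glb S m))"

text \<open>(ii) In a poset category every arrow is monic; the kernel pair of x \<le> y
is (id_x, id_x), whose coequalizer is x, so x \<rightarrow> y is an effective epimorphism
iff x = y.  Pullback of x \<le> y along z \<le> y is z \<sqinter> x.\<close>
definition effective_epi :: "'a::order \<Rightarrow> 'a \<Rightarrow> bool" where
  "effective_epi x y \<longleftrightarrow> x \<le> y \<and> x = y"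

definition has_stable_factorizations :: "'a::distrib_lattice itself \<Rightarrow> bool" where
  "has_stable_factorizations _ \<longleftrightarrow>
     (\<forall>x y::'a. x \<le> y \<longrightarrow> (\<exists>m. effective_epi x m \<and> m \<le> y \<and>
        (\<forall>z. z \<le> y \<longrightarrow> effective_epi (inf z x) (inf z m))))"

definition is_union_in :: "'a::order \<Rightarrow> 'a set \<Rightarrow> 'a \<Rightarrow> bool" where
  "is_union_in y S u \<longleftrightarrow> u \<le> y \<and> (\<forall>s\<in>S. s \<le> u) \<and>
      (\<forall>v. v \<le> y \<and> (\<forall>s\<in>S. s \<le> v) \<longrightarrow> u \<le> v)"

definition has_stable_unions :: "'l rel \<Rightarrow> 'a::distrib_lattice itself \<Rightarrow> bool" where
  "has_stable_unions lam _ \<longleftrightarrow>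
     (\<forall>(y::'a) S. S \<subseteq> {s. s \<le> y} \<and> |S| <o lam \<longrightarrow>
        (\<exists>u. is_union_in y S u \<and>
             (\<forall>z. z \<le> y \<longrightarrow> is_union_in z ((inf z) ` S) (inf z u))))"

text \<open>A family of arrows into y (given by the set of its domains) is extremal
epimorphic iff it factors through no proper subobject of y.\<close>
definition extremal_epi_family :: "'a::order \<Rightarrow> 'a set \<Rightarrow> bool" where
  "extremal_epi_family y F \<longleftrightarrow> (\<forall>x\<in>F. x \<le> y) \<and>
     (\<forall>m. m \<le> y \<and> (\<forall>x\<in>F. x \<le> m) \<longrightarrow> m = y)"

definition rooted_tree :: "'n set \<Rightarrow> ('n \<Rightarrow> 'n \<Rightarrow> bool) \<Rightarrow> 'n \<Rightarrow> bool" where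
  "rooted_tree T le r \<longleftrightarrow>
     (\<forall>t\<in>T. le t t) \<and>
     (\<forall>s\<in>T. \<forall>t\<in>T. le s t \<and> le t s \<longrightarrow> s = t) \<and>
     (\<forall>s\<in>T. \<forall>t\<in>T. \<forall>u\<in>T. le s t \<and> le t u \<longrightarrow> le s u) \<and>
     r \<in> T \<and> (\<forall>t\<in>T. le r t) \<and>
     (\<forall>t\<in>T. (\<forall>s\<in>T. \<forall>s'\<in>T. le s t \<and> le s' t \<longrightarrow> le s s' \<or> le s' s) \<and>
        (\<forall>A. A \<noteq> {} \<and> A \<subseteq> {s\<in>T. le s t} \<longrightarrow> (\<exists>a\<in>A. \<forall>b\<in>A. le a b)))"

definition imm_succs :: "'n set \<Rightarrow> ('n \<Rightarrow> 'n \<Rightarrow> bool) \<Rightarrow> 'n \<Rightarrow> 'n set" where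
  "imm_succs T le t = {s\<in>T. le t s \<and> s \<noteq> t \<and>
      \<not> (\<exists>u\<in>T. le t u \<and> u \<noteq> t \<and> le u s \<and> u \<noteq> s)}"

definition is_branch :: "'n set \<Rightarrow> ('n \<Rightarrow> 'n \<Rightarrow> bool) \<Rightarrow> 'n set \<Rightarrow> bool" where
  "is_branch T le B \<longleftrightarrow> B \<subseteq> T \<and> (\<forall>s\<in>B. \<forall>t\<in>B. le s t \<or> le t s) \<and>
     (\<forall>C. C \<subseteq> T \<and> B \<subseteq> C \<and> (\<forall>s\<in>C. \<forall>t\<in>C. le s t \<or> le t s) \<longrightarrow> C = B)"

text \<open>The (well-)order of a branch, as a relation; its order type is the length.\<close>
definition branch_order :: "('n \<Rightarrow> 'n \<Rightarrow> bool) \<Rightarrow> 'n set \<Rightarrow> 'n rel" where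
  "branch_order le B = {(s,t). s \<in> B \<and> t \<in> B \<and> le s t}"

definition continuous_branch :: "('n \<Rightarrow> 'n \<Rightarrow> bool) \<Rightarrow> ('n \<Rightarrow> 'a::order) \<Rightarrow> 'n set \<Rightarrow> bool" where
  "continuous_branch le D B \<longleftrightarrow>
     (\<forall>t\<in>B. let P = {s\<in>B. le s t \<and> s \<noteq> t} in
        (P \<noteq> {} \<and> \<not> (\<exists>p\<in>P. \<forall>s\<in>P. le s p)) \<longrightarrow> is_glb (D ` P) (D t))"

text \<open>A cotree: a diagram indexed by T^op, i.e. D is antitone (arrows D s \<rightarrow> D t
for t \<le> s).\<close>
definition is_cotree :: "'n set \<Rightarrow> ('n \<Rightarrow> 'n \<Rightarrow> bool) \<Rightarrow> 'n \<Rightarrow> ('n \<Rightarrow> 'a::order) \<Rightarrow> bool" where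
  "is_cotree T le r D \<longleftrightarrow> rooted_tree T le r \<and>
     (\<forall>s\<in>T. \<forall>t\<in>T. le t s \<longrightarrow> D s \<le> D t)"

text \<open>(iv) The transfinite-cocomposition condition.  Trees are taken with
nodes in the type 'k \<Rightarrow> 'l (of cardinality at least lam^kap).\<close>
definition cotree_condition :: "'l rel \<Rightarrow> 'k rel \<Rightarrow> 'a::distrib_lattice itself \<Rightarrow> bool" where
  "cotree_condition lam kap _ \<longleftrightarrow>
     (\<forall>(T::('k \<Rightarrow> 'l) set) le r (D::('k \<Rightarrow> 'l) \<Rightarrow> 'a).
        is_cotree T le r D \<and>
        (\<forall>t\<in>T. imm_succs T le t \<noteq> {} \<longrightarrow>
            extremal_epi_family (D t) (D ` imm_succs T le t) \<and> |imm_succs T le t| <o lam) \<and>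
        (\<forall>B. is_branch T le B \<longrightarrow> branch_order le B <o kap) \<and>
        (\<forall>B. is_branch T le B \<longrightarrow> continuous_branch le D B)
      \<longrightarrow> extremal_epi_family (D r) {m. \<exists>B. is_branch T le B \<and> is_glb (D ` B) m})"

definition coherent :: "'l rel \<Rightarrow> 'k rel \<Rightarrow> 'a::distrib_lattice itself \<Rightarrow> bool" where
  "coherent lam kap A \<longleftrightarrow> has_small_limits kap A \<and> has_stable_factorizations A \<and>
     has_stable_unions lam A \<and> cotree_condition lam kap A"

definition regular_infinite_cardinal :: "'k rel \<Rightarrow> bool" where
  "regular_infinite_cardinal r \<longleftrightarrow> Card_order r \<and> infinite (Field r) \<and> regularCard r"

end

theory Submission
  imports Defs
begin

text \<open>To separate \<open>a\<close> from \<open>b\<close> when \<open>\<not> a \<le> b\<close> by a \<open>\<kappa>\<close>-complete filter that is prime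
  for the joins of the \<open>A i\<close>, grow a tree of attempts of height \<open>\<le> \<kappa>\<close>.  Each stage is devoted
  to one index \<open>i\<close> (every index recurs cofinally often): if the current meet lies below
  \<open>\<Squnion>A i\<close>, branch over the elements of \<open>A i\<close> and meet with the chosen one, otherwise pass.
  By pullback-stability of unions the fewer than \<open>\<lambda>\<close> children of a node cover it, and limits
  are meets, so the cotree condition says that the meets along the branches cover \<open>a\<close>.
  A branch is cut off as soon as its meet falls below \<open>b\<close>; if all were, \<open>a \<le> b\<close> would
  follow.  So some branch runs through all of \<open>\<kappa>\<close>, and the up-closure of its meets is the
  filter: \<open>\<kappa>\<close>-complete because \<open>\<kappa>\<close> is regular, prime because every \<open>A i\<close> is handled
  again after every stage.  The points of \<open>X\<close> are such filters.\<close>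

lemma is_glb_unique: "is_glb S m \<Longrightarrow> is_glb S m' \<Longrightarrow> m = (m'::'a::order)"
  unfolding is_glb_def by (meson order.antisym)

lemma is_glb_antimono: "is_glb S m \<Longrightarrow> is_glb S' m' \<Longrightarrow> S \<subseteq> S' \<Longrightarrow> m' \<le> (m::'a::order)"
  unfolding is_glb_def by blast

lemma is_glb_insert_inf: "is_glb S (m::'a::lattice) \<Longrightarrow> is_glb (insert x S) (inf m x)"
  unfolding is_glb_def by (auto intro: le_infI1 le_infI2)

lemma extremal_epi_family_inf_join:
  fixes S :: "'a::distrib_lattice set"
  assumes "has_stable_unions lam TYPE('a)"
    and j: "is_lub S j" and "c \<le> j" and "|S| <o lam"
  shows "extremal_epi_family c ((inf c) ` S)"
proof -
  have "S \<subseteq> {s. s \<le> j}" using j unfolding is_lub_def by blast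
  then obtain u where u: "is_union_in j S u" "\<forall>z. z \<le> j \<longrightarrow> is_union_in z ((inf z) ` S) (inf z u)"
    using assms(1,4) unfolding has_stable_unions_def by blast
  have "u = j" using u(1) j unfolding is_union_in_def is_lub_def by (meson order.antisym order.refl)
  then have "is_union_in c ((inf c) ` S) (inf c j)" using u(2) \<open>c \<le> j\<close> by blast
  then have "is_union_in c ((inf c) ` S) c" using \<open>c \<le> j\<close> by (simp add: inf_absorb1)
  then show ?thesis unfolding extremal_epi_family_def is_union_in_def by (meson order.antisym)
qed

lemma finite_ordLess_infinite_Card_order:
  assumes "finite A" and "Card_order r" and "infinite (Field r)"
  shows "|A| <o r"
  using finite_ordLess_infinite[OF card_of_Well_order card_order_on_well_order_on] assms
  by (simp add: Field_card_of)

lemma inj_on_avoiding_finite: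
  fixes r :: "'b rel" and F :: "'b set"
  assumes "Card_order r" and "infinite (Field r)" and "|A| <o r" and "finite F"
  shows "\<exists>g. inj_on g A \<and> g ` A \<inter> F = {}"
proof -
  let ?U = "|UNIV :: 'b set|"
  have U: "Card_order ?U" "infinite (Field ?U)"
    using card_of_Card_order infinite_super[OF subset_UNIV assms(2)] unfolding Field_card_of by blast+
  have "|Field r| \<le>o ?U" by (rule card_of_mono1) simp
  then have A: "|A| <o ?U"
    using ordLess_ordIso_trans[OF assms(3) ordIso_symmetric[OF card_of_Field_ordIso[OF assms(1)]]]
    by (rule ordLess_ordLeq_trans[rotated])
  have "|A| \<le>o |UNIV - F|"
  proof (rule ccontr)
    assume "\<not> |A| \<le>o |UNIV - F|"
    then have "|UNIV - F| <o |A|" by (simp add: not_ordLeq_iff_ordLess card_of_Well_order)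
    then have "|UNIV - F| <o ?U" using A by (rule ordLess_transitive)
    moreover have "|F| <o ?U" using finite_ordLess_infinite_Card_order[OF \<open>finite F\<close> U] .
    ultimately have "|(UNIV - F) \<union> F| <o ?U" by (rule card_of_Un_ordLess_infinite_Field[OF U(2,1)])
    then show False by (simp add: ordLess_irreflexive)
  qed
  then show ?thesis unfolding card_of_ordLeq[symmetric] by blast
qed

section \<open>Well-orders\<close>

context wo_rel
begin

lemma Field_refl: "x \<in> Field r \<Longrightarrow> (x, x) \<in> r"
  by (rule refl_onD[OF REFL])

lemma rel_trans: "(x, y) \<in> r \<Longrightarrow> (y, z) \<in> r \<Longrightarrow> (x, z) \<in> r"
  by (rule transD[OF TRANS])

lemma rel_antisym: "(x, y) \<in> r \<Longrightarrow> (y, x) \<in> r \<Longrightarrow> x = y"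
  by (rule antisymD[OF ANTISYM])

lemma rel_total: "x \<in> Field r \<Longrightarrow> y \<in> Field r \<Longrightarrow> (x, y) \<in> r \<or> (y, x) \<in> r"
  using TOTALS by blast

lemma mem_underS_iff: "x \<in> underS y \<longleftrightarrow> x \<noteq> y \<and> (x, y) \<in> r"
  by (simp add: underS_def)

lemma underS_under_trans: "x \<in> underS y \<Longrightarrow> (y, z) \<in> r \<Longrightarrow> x \<in> underS z"
  using underS_incr[OF TRANS ANTISYM] by blast

lemma under_underS_trans: "(x, y) \<in> r \<Longrightarrow> y \<in> underS z \<Longrightarrow> x \<in> underS z"
  by (metis mem_underS_iff rel_antisym rel_trans)

lemma above_if_not_underS: "x \<in> Field r \<Longrightarrow> y \<in> Field r \<Longrightarrow> x \<notin> underS y \<Longrightarrow> (y, x) \<in> r"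
  by (metis rel_total mem_underS_iff)

lemma underS_inject: "x \<in> Field r \<Longrightarrow> y \<in> Field r \<Longrightarrow> underS x = underS y \<Longrightarrow> x = y"
  by (metis rel_antisym above_if_not_underS underS_notIn)

lemma exists_least: "S \<subseteq> Field r \<Longrightarrow> S \<noteq> {} \<Longrightarrow> \<exists>g\<in>S. \<forall>x\<in>S. (g, x) \<in> r"
  using minim_in minim_least by blast

lemma underS_suc_singleton:
  assumes "x \<in> Field r" and "AboveS {x} \<noteq> {}"
  shows "underS (suc {x}) = under x"
proof -
  have "suc {x} \<noteq> x \<and> (x, suc {x}) \<in> r"
    using suc_greater[of "{x}" x] assms by simp
  then have "x \<in> underS (suc {x})" by (auto simp: underS_def)
  then have "y \<in> underS (suc {x})" if "(y, x) \<in> r" for y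
    using that under_underS_trans by blast
  moreover have "(y, x) \<in> r" if y: "y \<in> underS (suc {x})" for y
  proof (rule ccontr)
    assume "(y, x) \<notin> r"
    moreover have "y \<in> Field r" using y underS_Field by fast
    ultimately have "y \<in> AboveS {x}"
      using assms(1) rel_total Field_refl by (auto simp: AboveS_def)
    then have "(suc {x}, y) \<in> r" by (rule suc_least_AboveS)
    then show False using y rel_antisym by (auto simp: underS_def)
  qed
  ultimately show ?thesis by (auto simp: under_def)
qed

lemma regularCard_small_bounded:
  assumes "regularCard r" and K: "K \<subseteq> Field r" "|K| <o r"
  shows "\<exists>\<gamma>\<in>Field r. \<forall>\<beta>\<in>K. (\<beta>, \<gamma>) \<in> r"
proof -
  have "\<not> cofinal K r" using assms(1) K not_ordLess_ordIso unfolding regularCard_def by blast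
  then obtain \<gamma> where \<gamma>: "\<gamma> \<in> Field r" "\<forall>\<beta>\<in>K. \<gamma> = \<beta> \<or> (\<gamma>, \<beta>) \<notin> r"
    unfolding cofinal_def by blast
  have "(\<beta>, \<gamma>) \<in> r" if "\<beta> \<in> K" for \<beta>
  proof (cases "\<gamma> = \<beta>")
    case True
    then show ?thesis using Field_refl \<gamma>(1) by simp
  next
    case False
    then have "(\<gamma>, \<beta>) \<notin> r" using \<gamma>(2) that by blast
    then show ?thesis using rel_total \<gamma>(1) K(1) that by blast
  qed
  then show ?thesis using \<gamma>(1) by blast
qed

lemma exists_cofinal_enumeration:
  assumes card: "Card_order r" and inf: "infinite (Field r)"
  shows "\<exists>p. (\<forall>\<beta>\<in>Field r. p \<beta> \<in> Field r) \<and>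
    (\<forall>i\<in>Field r. \<forall>\<delta>\<in>Field r. \<exists>\<beta>\<in>Field r. (\<delta>, \<beta>) \<in> r \<and> p \<beta> = i)"
proof -
  have "|Field r \<times> Field r| =o |Field r|" by (rule card_of_Times_same_infinite[OF inf])
  then obtain h where h: "bij_betw h (Field r) (Field r \<times> Field r)"
    unfolding card_of_ordIso[symmetric] using bij_betw_inv_into by blast
  let ?g = "inv_into (Field r) h"
  have g: "bij_betw ?g (Field r \<times> Field r) (Field r)" using h by (rule bij_betw_inv_into)
  have "\<exists>\<beta>\<in>Field r. (\<delta>, \<beta>) \<in> r \<and> fst (h \<beta>) = i" if i: "i \<in> Field r" and \<delta>: "\<delta> \<in> Field r" for i \<delta>
  proof (rule ccontr)
    assume none: "\<not> ?thesis"
    let ?K = "{\<beta>\<in>Field r. fst (h \<beta>) = i}"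
    have "?K \<subseteq> underS \<delta>"
    proof
      fix \<beta> assume \<beta>: "\<beta> \<in> ?K"
      then have "(\<delta>, \<beta>) \<notin> r" using none by blast
      then show "\<beta> \<in> underS \<delta>" using \<beta> \<delta> above_if_not_underS by blast
    qed
    then have "|?K| \<le>o |underS \<delta>|" by (rule card_of_mono1)
    then have "|?K| <o r" using card_of_underS[OF card \<delta>] by (rule ordLeq_ordLess_trans)
    moreover have "|Field r| \<le>o |?K|"
    proof -
      have "inj_on (\<lambda>\<gamma>. ?g (i, \<gamma>)) (Field r)"
        using bij_betw_imp_inj_on[OF g] i by (auto simp: inj_on_def)
      moreover have "?g (i, \<gamma>) \<in> ?K" if "\<gamma> \<in> Field r" for \<gamma>
        using that i bij_betw_inv_into_right[OF h] bij_betw_apply[OF g] by simp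
      ultimately show ?thesis unfolding card_of_ordLeq[symmetric] by blast
    qed
    ultimately have "|Field r| <o r" by (rule ordLeq_ordLess_trans[rotated])
    then show False using card_of_Field_ordIso[OF card] not_ordLess_ordIso by blast
  qed
  moreover have "\<forall>\<beta>\<in>Field r. fst (h \<beta>) \<in> Field r" using bij_betw_apply[OF h] by fastforce
  ultimately show ?thesis by (intro exI[of _ "\<lambda>\<beta>. fst (h \<beta>)"]) simp
qed

end

section \<open>The tree of attempts\<close>

definition complete_prime_filter :: "'k rel \<Rightarrow> ('k \<Rightarrow> 'a::order set) \<Rightarrow> 'a set \<Rightarrow> bool" where
  "complete_prime_filter kap A F \<longleftrightarrow> (\<forall>x y. x \<in> F \<and> x \<le> y \<longrightarrow> y \<in> F) \<and>
     (\<forall>S m. |S| <o kap \<and> S \<subseteq> F \<and> is_glb S m \<longrightarrow> m \<in> F) \<and>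
     (\<forall>i\<in>Field kap. \<forall>j. is_lub (A i) j \<and> j \<in> F \<longrightarrow> (\<exists>x\<in>A i. x \<in> F))"

text \<open>A node of height \<open>\<alpha>\<close> is a function \<open>t :: 'k \<Rightarrow> 'l\<close> with \<open>t \<beta> \<noteq> none\<close> exactly for
  \<open>\<beta> < \<alpha>\<close>.  Position \<open>\<beta>\<close> records the decision about the join of \<open>A (task \<beta>)\<close>: the code
  of the chosen element if the meet \<open>D\<close> of the node below \<open>\<beta>\<close> lies below that join, \<open>skip\<close>
  otherwise.  A node is only extended while \<open>D t \<le> b\<close> fails.\<close>

locale separation_tree = wo_rel kap
  for kap :: "'k rel" +
  fixes lam :: "'l rel" and A :: "'k \<Rightarrow> 'a::distrib_lattice set"
    and none skip :: 'l and code :: "'k \<Rightarrow> 'a \<Rightarrow> 'l" and task :: "'k \<Rightarrow> 'k" and a b :: 'a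
  assumes card_kap: "Card_order kap" and infinite_kap: "infinite (Field kap)"
    and regular_kap: "regularCard kap"
    and coherent: "coherent lam kap TYPE('a)"
    and card_lam: "Card_order lam" and infinite_lam: "infinite (Field lam)"
    and small_A: "\<forall>i\<in>Field kap. |A i| <o lam"
    and none_neq_skip: "none \<noteq> skip"
    and code_inj: "\<forall>i\<in>Field kap. inj_on (code i) (A i) \<and> none \<notin> code i ` A i \<and> skip \<notin> code i ` A i"
    and task_in_Field: "\<forall>\<beta>\<in>Field kap. task \<beta> \<in> Field kap"
    and task_cofinal: "\<forall>i\<in>Field kap. \<forall>\<delta>\<in>Field kap. \<exists>\<beta>\<in>Field kap. (\<delta>, \<beta>) \<in> kap \<and> task \<beta> = i"
    and a_not_le_b: "\<not> a \<le> b"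
begin

definition trunc :: "('k \<Rightarrow> 'l) \<Rightarrow> 'k \<Rightarrow> 'k \<Rightarrow> 'l" where
  "trunc t \<alpha> = (\<lambda>\<beta>. if \<beta> \<in> underS \<alpha> then t \<beta> else none)"

definition chosen :: "('k \<Rightarrow> 'l) \<Rightarrow> 'a set" where
  "chosen t = {x. \<exists>\<beta>\<in>Field kap. x \<in> A (task \<beta>) \<and> t \<beta> = code (task \<beta>) x}"

definition D :: "('k \<Rightarrow> 'l) \<Rightarrow> 'a" where
  "D t = (SOME m. is_glb (insert a (chosen t)) m)"

definition below_join :: "'a \<Rightarrow> 'k \<Rightarrow> bool" where
  "below_join c i \<longleftrightarrow> (\<exists>j. is_lub (A i) j \<and> c \<le> j)"

definition admissible :: "('k \<Rightarrow> 'l) \<Rightarrow> 'k \<Rightarrow> 'l \<Rightarrow> bool" where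
  "admissible s \<beta> v \<longleftrightarrow>
     (if below_join (D s) (task \<beta>) then \<exists>x\<in>A (task \<beta>). v = code (task \<beta>) x else v = skip)"

definition node :: "('k \<Rightarrow> 'l) \<Rightarrow> 'k \<Rightarrow> bool" where
  "node t \<alpha> \<longleftrightarrow> \<alpha> \<in> Field kap \<and> (\<forall>\<beta>. t \<beta> \<noteq> none \<longleftrightarrow> \<beta> \<in> underS \<alpha>) \<and>
     (\<forall>\<beta>\<in>underS \<alpha>. \<not> D (trunc t \<beta>) \<le> b \<and> admissible (trunc t \<beta>) \<beta> (t \<beta>))"

definition nodes :: "('k \<Rightarrow> 'l) set" where
  "nodes = {t. \<exists>\<alpha>. node t \<alpha>}"

definition prefix :: "('k \<Rightarrow> 'l) \<Rightarrow> ('k \<Rightarrow> 'l) \<Rightarrow> bool" where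
  "prefix s t \<longleftrightarrow> (\<forall>\<beta>. s \<beta> \<noteq> none \<longrightarrow> t \<beta> = s \<beta>)"

definition root :: "'k \<Rightarrow> 'l" where
  "root = (\<lambda>_. none)"

lemma nodesI: "node t \<alpha> \<Longrightarrow> t \<in> nodes"
  unfolding nodes_def by blast

lemma nodesD: "t \<in> nodes \<Longrightarrow> \<exists>\<alpha>. node t \<alpha>"
  unfolding nodes_def by blast

lemma code_neq_none: "\<beta> \<in> Field kap \<Longrightarrow> x \<in> A (task \<beta>) \<Longrightarrow> code (task \<beta>) x \<noteq> none"
  using code_inj task_in_Field by force

lemma small_limits: "|S::'a set| <o kap \<Longrightarrow> \<exists>m. is_glb S m"
  using coherent unfolding coherent_def has_small_limits_def by blast

lemma card_chosen_less:
  assumes dom: "\<forall>\<beta>. t \<beta> \<noteq> none \<longrightarrow> \<beta> \<in> underS \<alpha>" and \<alpha>: "\<alpha> \<in> Field kap"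
  shows "|insert a (chosen t)| <o kap"
proof -
  define pick where "pick \<beta> = (SOME x. x \<in> A (task \<beta>) \<and> t \<beta> = code (task \<beta>) x)" for \<beta>
  have "chosen t \<subseteq> pick ` underS \<alpha>"
  proof
    fix x assume "x \<in> chosen t"
    then obtain \<beta> where \<beta>: "\<beta> \<in> Field kap" "x \<in> A (task \<beta>)" "t \<beta> = code (task \<beta>) x"
      unfolding chosen_def by auto
    then have "\<beta> \<in> underS \<alpha>" using dom code_neq_none by metis
    moreover have "pick \<beta> \<in> A (task \<beta>) \<and> t \<beta> = code (task \<beta>) (pick \<beta>)"
      unfolding pick_def by (rule someI[of _ x]) (use \<beta> in auto)
    then have "pick \<beta> = x" using \<beta> code_inj task_in_Field by (metis inj_onD)
    ultimately show "x \<in> pick ` underS \<alpha>" by blast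
  qed
  then have "|chosen t| \<le>o |underS \<alpha>|"
    using card_of_mono1 card_of_image ordLeq_transitive by blast
  then have "|chosen t| <o kap"
    using card_of_underS[OF card_kap \<alpha>] by (rule ordLeq_ordLess_trans)
  moreover have "|{a}| <o kap"
    using finite_ordLess_infinite_Card_order card_kap infinite_kap by blast
  ultimately have "|chosen t \<union> {a}| <o kap"
    by (rule card_of_Un_ordLess_infinite_Field[OF infinite_kap card_kap])
  then show ?thesis by simp
qed

lemma D_is_glb:
  "\<forall>\<beta>. t \<beta> \<noteq> none \<longrightarrow> \<beta> \<in> underS \<alpha> \<Longrightarrow> \<alpha> \<in> Field kap \<Longrightarrow> is_glb (insert a (chosen t)) (D t)"
  unfolding D_def using small_limits[OF card_chosen_less] by (rule someI_ex)

lemma node_D_is_glb: "node t \<alpha> \<Longrightarrow> is_glb (insert a (chosen t)) (D t)"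
  by (rule D_is_glb[of t \<alpha>]) (auto simp: node_def)

lemma node_in_Field: "node t \<alpha> \<Longrightarrow> \<alpha> \<in> Field kap"
  by (simp add: node_def)

lemma node_defined_iff: "node t \<alpha> \<Longrightarrow> t \<beta> \<noteq> none \<longleftrightarrow> \<beta> \<in> underS \<alpha>"
  by (simp add: node_def)

lemma node_height_unique: "node t \<alpha> \<Longrightarrow> node t \<alpha>' \<Longrightarrow> \<alpha> = \<alpha>'"
  by (metis node_def underS_inject set_eqI)

lemma trunc_trunc: "(\<beta>, \<alpha>) \<in> kap \<Longrightarrow> trunc (trunc t \<alpha>) \<beta> = trunc t \<beta>"
  unfolding trunc_def using underS_under_trans by fastforce

lemma trunc_height: "node t \<alpha> \<Longrightarrow> trunc t \<alpha> = t"
  unfolding trunc_def using node_defined_iff by fastforce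

lemma node_trunc:
  assumes "node t \<alpha>" and "(\<beta>, \<alpha>) \<in> kap"
  shows "node (trunc t \<beta>) \<beta>"
proof -
  have "\<beta> \<in> Field kap" using assms(2) by (rule FieldI1)
  moreover have "trunc t \<beta> \<gamma> \<noteq> none \<longleftrightarrow> \<gamma> \<in> underS \<beta>" for \<gamma>
    using underS_under_trans[OF _ assms(2)] node_defined_iff[OF assms(1)] by (auto simp: trunc_def)
  moreover have "\<not> D (trunc (trunc t \<beta>) \<gamma>) \<le> b \<and> admissible (trunc (trunc t \<beta>) \<gamma>) \<gamma> (trunc t \<beta> \<gamma>)"
    if \<gamma>: "\<gamma> \<in> underS \<beta>" for \<gamma>
  proof -
    have "trunc (trunc t \<beta>) \<gamma> = trunc t \<gamma>" using \<gamma> trunc_trunc mem_underS_iff by blast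
    moreover have "trunc t \<beta> \<gamma> = t \<gamma>" using \<gamma> by (simp add: trunc_def)
    moreover have "\<gamma> \<in> underS \<alpha>" using \<gamma> assms(2) underS_under_trans by blast
    ultimately show ?thesis using assms(1) unfolding node_def by simp
  qed
  ultimately show ?thesis unfolding node_def by blast
qed

lemma prefix_refl: "prefix t t"
  by (simp add: prefix_def)

lemma prefix_trans: "prefix s t \<Longrightarrow> prefix t u \<Longrightarrow> prefix s u"
  unfolding prefix_def by metis

lemma prefix_antisym: "prefix s t \<Longrightarrow> prefix t s \<Longrightarrow> s = t"
  unfolding prefix_def by (metis ext)

lemma prefix_iff_trunc:
  assumes s: "node s \<alpha>" and t: "node t \<gamma>"
  shows "prefix s t \<longleftrightarrow> (\<alpha>, \<gamma>) \<in> kap \<and> trunc t \<alpha> = s"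
proof
  assume st: "prefix s t"
  have "underS \<alpha> \<subseteq> underS \<gamma>"
  proof
    fix \<beta> assume "\<beta> \<in> underS \<alpha>"
    then have "s \<beta> \<noteq> none" using node_defined_iff[OF s] by blast
    then have "t \<beta> \<noteq> none" using st unfolding prefix_def by metis
    then show "\<beta> \<in> underS \<gamma>" using node_defined_iff[OF t] by blast
  qed
  then have "\<gamma> \<notin> underS \<alpha>" using underS_notIn[of \<gamma> kap] by blast
  then have "(\<alpha>, \<gamma>) \<in> kap" by (rule above_if_not_underS[OF node_in_Field[OF t] node_in_Field[OF s]])
  moreover have "trunc t \<alpha> = s"
  proof
    fix \<beta> show "trunc t \<alpha> \<beta> = s \<beta>"
      using st node_defined_iff[OF s] unfolding prefix_def trunc_def by metis
  qed
  ultimately show "(\<alpha>, \<gamma>) \<in> kap \<and> trunc t \<alpha> = s" by blast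
next
  assume "(\<alpha>, \<gamma>) \<in> kap \<and> trunc t \<alpha> = s"
  then show "prefix s t" unfolding prefix_def trunc_def by auto
qed

lemma prefix_trunc: "node t \<gamma> \<Longrightarrow> (\<alpha>, \<gamma>) \<in> kap \<Longrightarrow> prefix (trunc t \<alpha>) t"
  using prefix_iff_trunc node_trunc by blast

lemma trunc_prefix_mono:
  assumes t: "node t \<gamma>" and "(\<beta>', \<gamma>) \<in> kap" and "(\<beta>, \<beta>') \<in> kap"
  shows "prefix (trunc t \<beta>) (trunc t \<beta>')"
proof -
  have "(\<beta>, \<gamma>) \<in> kap" using assms(2,3) rel_trans by blast
  then have "node (trunc t \<beta>) \<beta>" by (rule node_trunc[OF t])
  moreover have "node (trunc t \<beta>') \<beta>'" using assms(2) by (rule node_trunc[OF t])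
  ultimately show ?thesis using prefix_iff_trunc trunc_trunc[OF assms(3)] assms(3) by simp
qed

lemma prefix_of_node:
  assumes "node t \<gamma>" and "s \<in> nodes" and "prefix s t"
  shows "\<exists>\<beta>. (\<beta>, \<gamma>) \<in> kap \<and> s = trunc t \<beta> \<and> node s \<beta>"
proof -
  obtain \<beta> where "node s \<beta>" using assms(2) unfolding nodes_def by blast
  then show ?thesis using assms(1,3) prefix_iff_trunc by blast
qed

lemma prefixes_comparable:
  assumes "t \<in> nodes" "s \<in> nodes" "s' \<in> nodes" "prefix s t" "prefix s' t"
  shows "prefix s s' \<or> prefix s' s"
proof -
  obtain \<gamma> where t: "node t \<gamma>" using assms(1) unfolding nodes_def by blast
  obtain \<beta> \<beta>' where "(\<beta>, \<gamma>) \<in> kap" "s = trunc t \<beta>" "(\<beta>', \<gamma>) \<in> kap" "s' = trunc t \<beta>'"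
    using prefix_of_node t assms by metis
  then show ?thesis using trunc_prefix_mono[OF t] rel_total FieldI1 by metis
qed

lemma chosen_mono: "prefix s t \<Longrightarrow> chosen s \<subseteq> chosen t"
proof
  fix x assume st: "prefix s t" and "x \<in> chosen s"
  then obtain \<beta> where \<beta>: "\<beta> \<in> Field kap" "x \<in> A (task \<beta>)" "s \<beta> = code (task \<beta>) x"
    unfolding chosen_def by blast
  then have "t \<beta> = s \<beta>" using st code_neq_none unfolding prefix_def by metis
  then show "x \<in> chosen t" using \<beta> unfolding chosen_def by auto
qed

lemma D_antimono: "node s \<alpha> \<Longrightarrow> node t \<gamma> \<Longrightarrow> prefix s t \<Longrightarrow> D t \<le> D s"
  by (meson chosen_mono is_glb_antimono insert_mono node_D_is_glb)

lemma D_le_a: "node t \<gamma> \<Longrightarrow> D t \<le> a"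
  using node_D_is_glb unfolding is_glb_def by blast

lemma D_le_chosen: "node t \<gamma> \<Longrightarrow> x \<in> chosen t \<Longrightarrow> D t \<le> x"
  using node_D_is_glb unfolding is_glb_def by blast

lemma D_greatest: "node t \<gamma> \<Longrightarrow> y \<le> a \<Longrightarrow> \<forall>x\<in>chosen t. y \<le> x \<Longrightarrow> y \<le> D t"
  using node_D_is_glb unfolding is_glb_def by blast

lemma node_root: "node root (minim (Field kap))"
proof -
  have "Field kap \<noteq> {}" using infinite_kap by auto
  then have min: "minim (Field kap) \<in> Field kap" "\<forall>\<beta>\<in>Field kap. (minim (Field kap), \<beta>) \<in> kap"
    using minim_in minim_least by blast+
  have "underS (minim (Field kap)) = {}"
  proof -
    have "\<beta> \<notin> underS (minim (Field kap))" for \<beta>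
      using min rel_antisym FieldI1[of \<beta> "minim (Field kap)" kap] by (auto simp: underS_def)
    then show ?thesis by blast
  qed
  then show ?thesis unfolding node_def root_def using min(1) by auto
qed

lemma D_root: "D root = a"
proof -
  have "chosen root = {}" unfolding chosen_def root_def using code_neq_none by force
  then have "is_glb {a} (D root)" using node_D_is_glb[OF node_root] by simp
  moreover have "is_glb {a} a" unfolding is_glb_def by simp
  ultimately show ?thesis using is_glb_unique by blast
qed

lemma AboveS_singleton_nonempty:
  assumes "\<alpha> \<in> Field kap"
  shows "AboveS {\<alpha>} \<noteq> {}"
proof -
  obtain \<beta> where "\<beta> \<in> Field kap" "\<alpha> \<noteq> \<beta>" "(\<alpha>, \<beta>) \<in> kap"
    using infinite_Card_order_limit[OF card_kap infinite_kap assms] by blast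
  then have "\<beta> \<in> AboveS {\<alpha>}" by (simp add: AboveS_def)
  then show ?thesis by blast
qed

lemma suc_in_Field: "\<alpha> \<in> Field kap \<Longrightarrow> suc {\<alpha>} \<in> Field kap"
  by (rule suc_inField) (simp_all add: AboveS_singleton_nonempty)

lemma mem_underS_suc: "\<alpha> \<in> Field kap \<Longrightarrow> \<gamma> \<in> underS (suc {\<alpha>}) \<longleftrightarrow> (\<gamma>, \<alpha>) \<in> kap"
  by (simp add: underS_suc_singleton AboveS_singleton_nonempty under_def)

lemma mem_underS_suc_self: "\<alpha> \<in> Field kap \<Longrightarrow> \<alpha> \<in> underS (suc {\<alpha>})"
  by (simp add: mem_underS_suc Field_refl)

lemma mem_underS_suc_iff: "\<alpha> \<in> Field kap \<Longrightarrow> \<beta> \<noteq> \<alpha> \<Longrightarrow> \<beta> \<in> underS (suc {\<alpha>}) \<longleftrightarrow> \<beta> \<in> underS \<alpha>"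
  by (simp add: mem_underS_suc) (simp add: underS_def)

lemma admissible_neq_none: "\<alpha> \<in> Field kap \<Longrightarrow> admissible s \<alpha> v \<Longrightarrow> v \<noteq> none"
  unfolding admissible_def using code_neq_none none_neq_skip by (auto split: if_splits)

lemma node_extend:
  assumes s: "node s \<alpha>" and "\<not> D s \<le> b" and "admissible s \<alpha> v"
  shows "node (s(\<alpha> := v)) (suc {\<alpha>})"
proof -
  have \<alpha>: "\<alpha> \<in> Field kap" using s by (rule node_in_Field)
  have "(s(\<alpha> := v)) \<beta> \<noteq> none \<longleftrightarrow> \<beta> \<in> underS (suc {\<alpha>})" for \<beta>
  proof (cases "\<beta> = \<alpha>")
    case True
    then show ?thesis using admissible_neq_none[OF \<alpha> assms(3)] mem_underS_suc_self[OF \<alpha>] by simp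
  next
    case False
    then show ?thesis using mem_underS_suc_iff[OF \<alpha>] node_defined_iff[OF s] by simp
  qed
  moreover have "\<not> D (trunc (s(\<alpha> := v)) \<beta>) \<le> b \<and> admissible (trunc (s(\<alpha> := v)) \<beta>) \<beta> ((s(\<alpha> := v)) \<beta>)"
    if \<beta>: "\<beta> \<in> underS (suc {\<alpha>})" for \<beta>
  proof (cases "\<beta> = \<alpha>")
    case True
    have "trunc (s(\<alpha> := v)) \<alpha> = trunc s \<alpha>" unfolding trunc_def using underS_notIn[of \<alpha> kap] by auto
    then show ?thesis using True assms trunc_height[OF s] by simp
  next
    case False
    then have \<beta>\<alpha>: "\<beta> \<in> underS \<alpha>" using \<beta> mem_underS_suc_iff[OF \<alpha>] by blast
    then have "\<alpha> \<notin> underS \<beta>" using rel_antisym by (auto simp: underS_def)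
    then have "trunc (s(\<alpha> := v)) \<beta> = trunc s \<beta>" unfolding trunc_def by auto
    then show ?thesis using False \<beta>\<alpha> s unfolding node_def by simp
  qed
  ultimately show ?thesis unfolding node_def using suc_in_Field[OF \<alpha>] by blast
qed

lemma node_undefined_at_height: "node s \<alpha> \<Longrightarrow> s \<alpha> = none"
  using node_defined_iff[of s \<alpha> \<alpha>] underS_notIn[of \<alpha> kap] by blast

lemma imm_succ_is_extension:
  assumes s: "node s \<alpha>" and t: "t \<in> imm_succs nodes prefix s"
  shows "\<exists>v. t = s(\<alpha> := v) \<and> admissible s \<alpha> v \<and> \<not> D s \<le> b"
proof -
  have \<alpha>: "\<alpha> \<in> Field kap" using s by (rule node_in_Field)
  have "t \<in> nodes" "prefix s t" "t \<noteq> s"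
    and between: "\<not> (\<exists>u\<in>nodes. prefix s u \<and> u \<noteq> s \<and> prefix u t \<and> u \<noteq> t)"
    using t unfolding imm_succs_def by auto
  then obtain \<gamma> where tn: "node t \<gamma>" unfolding nodes_def by blast
  have \<alpha>\<gamma>: "(\<alpha>, \<gamma>) \<in> kap" "trunc t \<alpha> = s" using prefix_iff_trunc[OF s tn] \<open>prefix s t\<close> by auto
  have "\<alpha> \<noteq> \<gamma>"
  proof
    assume "\<alpha> = \<gamma>"
    then show False using \<alpha>\<gamma>(2) trunc_height[OF tn] \<open>t \<noteq> s\<close> by simp
  qed
  then have "\<alpha> \<in> underS \<gamma>" using \<alpha>\<gamma>(1) by (simp add: underS_def)
  have "\<gamma> \<notin> underS (suc {\<alpha>})"
    using mem_underS_suc[OF \<alpha>] rel_antisym[OF \<alpha>\<gamma>(1)] \<open>\<alpha> \<noteq> \<gamma>\<close> by blast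
  then have suc\<gamma>: "(suc {\<alpha>}, \<gamma>) \<in> kap"
    by (rule above_if_not_underS[OF node_in_Field[OF tn] suc_in_Field[OF \<alpha>]])
  let ?u = "trunc t (suc {\<alpha>})"
  have un: "node ?u (suc {\<alpha>})" using node_trunc[OF tn suc\<gamma>] .
  have \<alpha>suc: "(\<alpha>, suc {\<alpha>}) \<in> kap" using mem_underS_suc_self[OF \<alpha>] by (simp add: underS_def)
  then have "trunc ?u \<alpha> = s" using trunc_trunc \<alpha>\<gamma>(2) by simp
  then have "prefix s ?u" using prefix_iff_trunc[OF s un] \<alpha>suc by simp
  moreover have "?u \<noteq> s"
  proof
    assume "?u = s"
    moreover have "?u \<alpha> = t \<alpha>" using mem_underS_suc_self[OF \<alpha>] by (simp add: trunc_def)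
    moreover have "t \<alpha> \<noteq> none" using node_defined_iff[OF tn] \<open>\<alpha> \<in> underS \<gamma>\<close> by blast
    ultimately show False using node_undefined_at_height[OF s] by simp
  qed
  moreover have "prefix ?u t" using prefix_trunc[OF tn suc\<gamma>] .
  moreover have "?u \<in> nodes" using un unfolding nodes_def by blast
  ultimately have "?u = t" using between by blast
  then have tsuc: "node t (suc {\<alpha>})" using un by simp
  have "t \<beta> = (s(\<alpha> := t \<alpha>)) \<beta>" for \<beta>
  proof (cases "\<beta> \<in> underS \<alpha>")
    case True
    then have "\<beta> \<noteq> \<alpha>" using underS_notIn[of \<alpha> kap] by blast
    moreover have "s \<beta> = t \<beta>" using \<alpha>\<gamma>(2)[symmetric] True by (simp add: trunc_def)
    ultimately show ?thesis by simp
  next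
    case False
    show ?thesis
    proof (cases "\<beta> = \<alpha>")
      case False
      then have "t \<beta> = none" using node_defined_iff[OF tsuc] mem_underS_suc_iff[OF \<alpha>] \<open>\<beta> \<notin> underS \<alpha>\<close> by blast
      moreover have "s \<beta> = none" using node_defined_iff[OF s] \<open>\<beta> \<notin> underS \<alpha>\<close> by blast
      ultimately show ?thesis using False by simp
    qed simp
  qed
  then have "t = s(\<alpha> := t \<alpha>)" by (rule ext)
  moreover have "\<not> D (trunc t \<alpha>) \<le> b \<and> admissible (trunc t \<alpha>) \<alpha> (t \<alpha>)"
    using tsuc mem_underS_suc_self[OF \<alpha>] unfolding node_def by blast
  then have "\<not> D s \<le> b \<and> admissible s \<alpha> (t \<alpha>)" using \<alpha>\<gamma>(2) by simp
  ultimately show ?thesis by blast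
qed

lemma extension_is_imm_succ:
  assumes s: "node s \<alpha>" and v: "admissible s \<alpha> v" and "\<not> D s \<le> b"
  shows "s(\<alpha> := v) \<in> imm_succs nodes prefix s"
proof -
  have \<alpha>: "\<alpha> \<in> Field kap" using s by (rule node_in_Field)
  let ?t = "s(\<alpha> := v)"
  have tn: "node ?t (suc {\<alpha>})" using node_extend assms by blast
  have "prefix s ?t" using node_undefined_at_height[OF s] by (auto simp: prefix_def)
  moreover have "?t \<noteq> s"
    using admissible_neq_none[OF \<alpha> v] node_undefined_at_height[OF s] by (metis fun_upd_same)
  moreover have "\<not> (\<exists>u\<in>nodes. prefix s u \<and> u \<noteq> s \<and> prefix u ?t \<and> u \<noteq> ?t)"
  proof
    assume "\<exists>u\<in>nodes. prefix s u \<and> u \<noteq> s \<and> prefix u ?t \<and> u \<noteq> ?t"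
    then obtain u \<mu> where u: "node u \<mu>" "prefix s u" "u \<noteq> s" "prefix u ?t" "u \<noteq> ?t"
      unfolding nodes_def by blast
    have "(\<alpha>, \<mu>) \<in> kap" "\<alpha> \<noteq> \<mu>"
      using prefix_iff_trunc[OF s u(1)] u(2,3) trunc_height[OF u(1)] by auto
    moreover have "(\<mu>, suc {\<alpha>}) \<in> kap" "\<mu> \<noteq> suc {\<alpha>}"
      using prefix_iff_trunc[OF u(1) tn] u(4,5) trunc_height[OF tn] by auto
    then have "\<mu> \<in> underS (suc {\<alpha>})" by (simp add: underS_def)
    then have "(\<mu>, \<alpha>) \<in> kap" using mem_underS_suc[OF \<alpha>] by blast
    ultimately show False using rel_antisym by blast
  qed
  moreover have "?t \<in> nodes" using tn unfolding nodes_def by blast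
  ultimately show ?thesis unfolding imm_succs_def by blast
qed

lemma imm_succs_node:
  assumes "node s \<alpha>"
  shows "imm_succs nodes prefix s = {s(\<alpha> := v) | v. admissible s \<alpha> v \<and> \<not> D s \<le> b}"
  using imm_succ_is_extension[OF assms] extension_is_imm_succ[OF assms] by blast

lemma chosen_update:
  assumes s: "node s \<alpha>" and x: "x \<in> A (task \<alpha>)"
  shows "chosen (s(\<alpha> := code (task \<alpha>) x)) = insert x (chosen s)"
proof (intro set_eqI iffI)
  have \<alpha>: "\<alpha> \<in> Field kap" using s by (rule node_in_Field)
  fix y
  {
    assume "y \<in> chosen (s(\<alpha> := code (task \<alpha>) x))"
    then obtain \<beta> where \<beta>: "\<beta> \<in> Field kap" "y \<in> A (task \<beta>)"
      "(s(\<alpha> := code (task \<alpha>) x)) \<beta> = code (task \<beta>) y"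
      unfolding chosen_def by blast
    show "y \<in> insert x (chosen s)"
    proof (cases "\<beta> = \<alpha>")
      case True
      then have "code (task \<alpha>) y = code (task \<alpha>) x" "y \<in> A (task \<alpha>)" using \<beta> by simp_all
      moreover have "inj_on (code (task \<alpha>)) (A (task \<alpha>))" using code_inj task_in_Field \<alpha> by blast
      ultimately have "y = x" using x by (simp add: inj_on_eq_iff)
      then show ?thesis by blast
    next
      case False
      then show ?thesis using \<beta> unfolding chosen_def by auto
    qed
  }
  {
    assume "y \<in> insert x (chosen s)"
    then show "y \<in> chosen (s(\<alpha> := code (task \<alpha>) x))"
    proof
      assume "y = x"
      then show ?thesis unfolding chosen_def using \<alpha> x by force
    next
      assume "y \<in> chosen s"
      then obtain \<beta> where \<beta>: "\<beta> \<in> Field kap" "y \<in> A (task \<beta>)" "s \<beta> = code (task \<beta>) y"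
        unfolding chosen_def by blast
      then have "\<beta> \<noteq> \<alpha>" using node_undefined_at_height[OF s] code_neq_none by metis
      then show ?thesis using \<beta> unfolding chosen_def by auto
    qed
  }
qed

lemma chosen_skip: "node s \<alpha> \<Longrightarrow> chosen (s(\<alpha> := skip)) = chosen s"
  unfolding chosen_def using code_inj task_in_Field node_undefined_at_height node_in_Field
  by (auto, force+)

lemma D_update:
  assumes s: "node s \<alpha>" and x: "x \<in> A (task \<alpha>)"
  shows "D (s(\<alpha> := code (task \<alpha>) x)) = inf (D s) x"
proof -
  have \<alpha>: "\<alpha> \<in> Field kap" using s by (rule node_in_Field)
  have "(s(\<alpha> := code (task \<alpha>) x)) \<beta> \<noteq> none \<longrightarrow> \<beta> \<in> underS (suc {\<alpha>})" for \<beta>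
    using node_defined_iff[OF s] mem_underS_suc_iff[OF \<alpha>] mem_underS_suc_self[OF \<alpha>] by auto
  then have "is_glb (insert a (chosen (s(\<alpha> := code (task \<alpha>) x)))) (D (s(\<alpha> := code (task \<alpha>) x)))"
    using D_is_glb suc_in_Field[OF \<alpha>] by blast
  moreover have "is_glb (insert a (chosen (s(\<alpha> := code (task \<alpha>) x)))) (inf (D s) x)"
    using is_glb_insert_inf[OF node_D_is_glb[OF s], of x] chosen_update[OF s x]
    by (simp add: insert_commute)
  ultimately show ?thesis using is_glb_unique by blast
qed

lemma D_skip: "node s \<alpha> \<Longrightarrow> D (s(\<alpha> := skip)) = D s"
  unfolding D_def using chosen_skip by simp

lemma imm_succs_extremal:
  assumes s: "node s \<alpha>" and "imm_succs nodes prefix s \<noteq> {}"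
  shows "extremal_epi_family (D s) (D ` imm_succs nodes prefix s) \<and> |imm_succs nodes prefix s| <o lam"
proof -
  have \<alpha>: "\<alpha> \<in> Field kap" using s by (rule node_in_Field)
  have small: "|A (task \<alpha>)| <o lam" using small_A task_in_Field \<alpha> by blast
  have "\<not> D s \<le> b" using assms imm_succs_node by auto
  show ?thesis
  proof (cases "below_join (D s) (task \<alpha>)")
    case True
    then have succs: "imm_succs nodes prefix s = (\<lambda>x. s(\<alpha> := code (task \<alpha>) x)) ` A (task \<alpha>)"
      using imm_succs_node[OF s] \<open>\<not> D s \<le> b\<close> unfolding admissible_def by auto
    then have "D ` imm_succs nodes prefix s = inf (D s) ` A (task \<alpha>)"
      using D_update[OF s] by (auto simp: image_iff)
    moreover obtain j where "is_lub (A (task \<alpha>)) j" "D s \<le> j" using True below_join_def by blast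
    moreover have "has_stable_unions lam TYPE('a)" using coherent coherent_def by blast
    ultimately have "extremal_epi_family (D s) (D ` imm_succs nodes prefix s)"
      using extremal_epi_family_inf_join small by simp
    moreover have "|imm_succs nodes prefix s| <o lam"
      unfolding succs by (rule ordLeq_ordLess_trans[OF card_of_image small])
    ultimately show ?thesis by blast
  next
    case False
    then have succs: "imm_succs nodes prefix s = {s(\<alpha> := skip)}"
      using imm_succs_node[OF s] \<open>\<not> D s \<le> b\<close> unfolding admissible_def by auto
    have "extremal_epi_family (D s) (D ` imm_succs nodes prefix s)"
      unfolding succs using D_skip[OF s] by (auto simp: extremal_epi_family_def intro: order.antisym)
    moreover have "|imm_succs nodes prefix s| <o lam"
      unfolding succs by (rule finite_ordLess_infinite_Card_order[OF _ card_lam infinite_lam]) simp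
    ultimately show ?thesis by blast
  qed
qed

lemma prefixes_have_least:
  assumes t: "node t \<gamma>" and "S \<noteq> {}" and S: "S \<subseteq> {s\<in>nodes. prefix s t}"
  shows "\<exists>x\<in>S. \<forall>y\<in>S. prefix x y"
proof -
  let ?L = "{\<beta>. (\<beta>, \<gamma>) \<in> kap \<and> trunc t \<beta> \<in> S}"
  have S_trunc: "\<exists>\<beta>. (\<beta>, \<gamma>) \<in> kap \<and> s = trunc t \<beta>" if "s \<in> S" for s
    using prefix_of_node[OF t] S that by blast
  then have "?L \<noteq> {}" using \<open>S \<noteq> {}\<close> by fastforce
  moreover have "?L \<subseteq> Field kap" by (auto intro: FieldI1)
  ultimately obtain g where g: "g \<in> ?L" "\<forall>x\<in>?L. (g, x) \<in> kap" using exists_least[of ?L] by blast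
  have "prefix (trunc t g) y" if "y \<in> S" for y
  proof -
    obtain \<beta> where "(\<beta>, \<gamma>) \<in> kap" "y = trunc t \<beta>" using S_trunc \<open>y \<in> S\<close> by blast
    then show ?thesis using g trunc_prefix_mono[OF t] \<open>y \<in> S\<close> by blast
  qed
  then show ?thesis using g by blast
qed

lemma rooted_tree_nodes: "rooted_tree nodes prefix root"
proof -
  have "root \<in> nodes" using node_root by (rule nodesI)
  moreover have "\<forall>t\<in>nodes. prefix root t" by (simp add: prefix_def root_def)
  moreover have "\<forall>t\<in>nodes. (\<forall>s\<in>nodes. \<forall>s'\<in>nodes. prefix s t \<and> prefix s' t \<longrightarrow> prefix s s' \<or> prefix s' s) \<and>
      (\<forall>S. S \<noteq> {} \<and> S \<subseteq> {s\<in>nodes. prefix s t} \<longrightarrow> (\<exists>x\<in>S. \<forall>y\<in>S. prefix x y))"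
  proof
    fix t assume "t \<in> nodes"
    then obtain \<gamma> where "node t \<gamma>" using nodesD by blast
    then show "(\<forall>s\<in>nodes. \<forall>s'\<in>nodes. prefix s t \<and> prefix s' t \<longrightarrow> prefix s s' \<or> prefix s' s) \<and>
      (\<forall>S. S \<noteq> {} \<and> S \<subseteq> {s\<in>nodes. prefix s t} \<longrightarrow> (\<exists>x\<in>S. \<forall>y\<in>S. prefix x y))"
      using prefixes_comparable[OF \<open>t \<in> nodes\<close>] prefixes_have_least by blast
  qed
  moreover have "\<forall>t\<in>nodes. prefix t t" using prefix_refl by blast
  moreover have "\<forall>s\<in>nodes. \<forall>t\<in>nodes. prefix s t \<and> prefix t s \<longrightarrow> s = t" using prefix_antisym by blast
  moreover have "\<forall>s\<in>nodes. \<forall>t\<in>nodes. \<forall>u\<in>nodes. prefix s t \<and> prefix t u \<longrightarrow> prefix s u"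
    using prefix_trans by blast
  ultimately show ?thesis unfolding rooted_tree_def by (intro conjI)
qed

lemma is_cotree_nodes: "is_cotree nodes prefix root D"
  unfolding is_cotree_def
proof (intro conjI rooted_tree_nodes ballI impI)
  fix s t assume "s \<in> nodes" "t \<in> nodes" "prefix t s"
  then show "D s \<le> D t" using nodesD D_antimono by metis
qed

section \<open>Branches\<close>

lemma Restr_under_ordLess: "\<alpha> \<in> Field kap \<Longrightarrow> Restr kap (under \<alpha>) <o kap"
proof -
  assume \<alpha>: "\<alpha> \<in> Field kap"
  have "under \<alpha> \<subseteq> Field kap" by (auto simp: under_def intro: FieldI1)
  moreover have "suc {\<alpha>} \<notin> under \<alpha>"
    using mem_underS_suc_self[OF \<alpha>] rel_antisym by (auto simp: under_def underS_def)
  ultimately have "under \<alpha> < Field kap" using suc_in_Field[OF \<alpha>] by blast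
  then show ?thesis using ofilter_ordLess[OF WELL under_ofilter] by blast
qed

lemma trunc_image_ordIso:
  assumes t: "node t \<alpha>"
  shows "Restr kap (under \<alpha>) =o branch_order prefix (trunc t ` under \<alpha>)"
proof -
  let ?U = "under \<alpha>"
  have node: "node (trunc t \<beta>) \<beta>" if "\<beta> \<in> ?U" for \<beta>
    using that node_trunc[OF t] by (simp add: under_def)
  have "inj_on (trunc t) (Field (Restr kap ?U))"
  proof (rule inj_onI)
    fix x y assume "x \<in> Field (Restr kap ?U)" "y \<in> Field (Restr kap ?U)" "trunc t x = trunc t y"
    then show "x = y" using Field_Restr_subset[of kap ?U] node node_height_unique by (metis subsetD)
  qed
  moreover have "branch_order prefix (trunc t ` ?U) = dir_image (Restr kap ?U) (trunc t)"
  proof (intro set_eqI iffI)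
    fix p assume "p \<in> branch_order prefix (trunc t ` ?U)"
    then obtain \<beta> \<beta>' where "p = (trunc t \<beta>, trunc t \<beta>')" "\<beta> \<in> ?U" "\<beta>' \<in> ?U"
      "prefix (trunc t \<beta>) (trunc t \<beta>')"
      unfolding branch_order_def by blast
    moreover from this have "(\<beta>, \<beta>') \<in> kap" using prefix_iff_trunc node by blast
    ultimately show "p \<in> dir_image (Restr kap ?U) (trunc t)" unfolding dir_image_def by blast
  next
    fix p assume "p \<in> dir_image (Restr kap ?U) (trunc t)"
    then obtain \<beta> \<beta>' where p: "p = (trunc t \<beta>, trunc t \<beta>')" "(\<beta>, \<beta>') \<in> kap" "\<beta> \<in> ?U" "\<beta>' \<in> ?U"
      unfolding dir_image_def by blast
    then have "prefix (trunc t \<beta>) (trunc t \<beta>')" using trunc_prefix_mono[OF t] by (simp add: under_def)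
    then show "p \<in> branch_order prefix (trunc t ` ?U)" unfolding branch_order_def using p by blast
  qed
  moreover have "Well_order (Restr kap ?U)" using Well_order_Restr WELL by blast
  ultimately show ?thesis using dir_image_ordIso by metis
qed

definition branch_union :: "('k \<Rightarrow> 'l) set \<Rightarrow> 'k \<Rightarrow> 'l" where
  "branch_union B \<beta> = (if \<exists>t\<in>B. t \<beta> \<noteq> none then (SOME t. t \<in> B \<and> t \<beta> \<noteq> none) \<beta> else none)"

definition branch_filter :: "('k \<Rightarrow> 'l) set \<Rightarrow> 'a set" where
  "branch_filter B = {x. \<exists>t\<in>B. D t \<le> x}"

context
  fixes B
  assumes branch: "is_branch nodes prefix B"
begin

lemma branch_subset_nodes: "B \<subseteq> nodes"
  using branch unfolding is_branch_def by blast

lemma branch_node: "t \<in> B \<Longrightarrow> \<exists>\<alpha>. node t \<alpha>"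
  using branch_subset_nodes nodesD by blast

lemma branch_chain: "t \<in> B \<Longrightarrow> t' \<in> B \<Longrightarrow> prefix t t' \<or> prefix t' t"
  using branch unfolding is_branch_def by blast

lemma branch_insert_comparable:
  assumes "c \<in> nodes" and "\<forall>x\<in>B. prefix x c \<or> prefix c x"
  shows "c \<in> B"
proof -
  have "insert c B \<subseteq> nodes" using branch_subset_nodes assms(1) by blast
  moreover have "\<forall>x\<in>insert c B. \<forall>y\<in>insert c B. prefix x y \<or> prefix y x"
    using branch_chain assms(2) prefix_refl by blast
  ultimately have "insert c B = B" using branch unfolding is_branch_def by blast
  then show ?thesis by blast
qed

lemma branch_downward_closed:
  assumes "t \<in> B" and "s \<in> nodes" and "prefix s t"
  shows "s \<in> B"
proof -
  have "prefix s u \<or> prefix u s" if u: "u \<in> B" for u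
  proof -
    consider "prefix u t" | "prefix t u" using branch_chain u assms(1) by blast
    then show ?thesis
    proof cases
      case 1
      then show ?thesis using prefixes_comparable[of t u s] u assms branch_subset_nodes by blast
    next
      case 2
      then show ?thesis using prefix_trans assms(3) by blast
    qed
  qed
  then show ?thesis using branch_insert_comparable[OF assms(2)] by blast
qed

lemma chosen_below_limit:
  assumes t: "t \<in> B" "node t \<alpha>"
    and no_max: "\<not> (\<exists>p\<in>{s\<in>B. prefix s t \<and> s \<noteq> t}. \<forall>s\<in>{s\<in>B. prefix s t \<and> s \<noteq> t}. prefix s p)"
    and x: "x \<in> chosen t"
  shows "\<exists>s\<in>B. prefix s t \<and> s \<noteq> t \<and> x \<in> chosen s"
proof -
  obtain \<gamma> where \<gamma>: "\<gamma> \<in> Field kap" "x \<in> A (task \<gamma>)" "t \<gamma> = code (task \<gamma>) x"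
    using x unfolding chosen_def by blast
  then have "\<gamma> \<in> underS \<alpha>" using code_neq_none node_defined_iff[OF t(2)] by metis
  then have \<gamma>\<alpha>: "(\<gamma>, \<alpha>) \<in> kap" by (simp add: underS_def)
  have "trunc t \<gamma> \<noteq> t"
  proof
    assume "trunc t \<gamma> = t"
    then have "t \<gamma> = none" using underS_notIn[of \<gamma> kap] by (metis trunc_def)
    then show False using code_neq_none \<gamma> by simp
  qed
  moreover have "trunc t \<gamma> \<in> B"
    using branch_downward_closed[OF t(1) nodesI[OF node_trunc[OF t(2) \<gamma>\<alpha>]] prefix_trunc[OF t(2) \<gamma>\<alpha>]] .
  ultimately obtain s where s: "s \<in> B" "prefix s t" "s \<noteq> t" "\<not> prefix s (trunc t \<gamma>)"
    using no_max prefix_trunc[OF t(2) \<gamma>\<alpha>] by blast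
  then obtain \<beta> where \<beta>: "(\<beta>, \<alpha>) \<in> kap" "s = trunc t \<beta>"
    using prefix_of_node[OF t(2)] branch_subset_nodes by blast
  then have "(\<beta>, \<gamma>) \<notin> kap" using trunc_prefix_mono[OF t(2) \<gamma>\<alpha>] s(4) by blast
  then have "\<gamma> \<in> underS \<beta>" using above_if_not_underS[OF \<gamma>(1) FieldI1[OF \<beta>(1)]] by blast
  then have "x \<in> chosen s" using \<gamma> \<beta>(2) unfolding chosen_def trunc_def by auto
  then show ?thesis using s by blast
qed

lemma branch_continuous: "continuous_branch prefix D B"
  unfolding continuous_branch_def Let_def
proof (intro ballI impI)
  fix t assume tB: "t \<in> B"
  let ?P = "{s \<in> B. prefix s t \<and> s \<noteq> t}"
  assume limit: "?P \<noteq> {} \<and> \<not> (\<exists>p\<in>?P. \<forall>s\<in>?P. prefix s p)"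
  obtain \<alpha> where t: "node t \<alpha>" using branch_node tB by blast
  have "D t \<le> D s" if "s \<in> ?P" for s
    using that branch_node D_antimono[OF _ t] by blast
  moreover have "y \<le> D t" if y: "\<forall>s\<in>?P. y \<le> D s" for y
  proof (rule D_greatest[OF t])
    obtain s \<beta> where "s \<in> ?P" "node s \<beta>" using limit branch_node by blast
    then show "y \<le> a" using y D_le_a order.trans by blast
    show "\<forall>x\<in>chosen t. y \<le> x"
    proof
      fix x assume "x \<in> chosen t"
      then obtain s where "s \<in> ?P" "x \<in> chosen s" using chosen_below_limit[OF tB t] limit by blast
      moreover obtain \<beta> where "node s \<beta>" using branch_node \<open>s \<in> ?P\<close> by blast
      ultimately show "y \<le> x" using y D_le_chosen order.trans by blast
    qed
  qed
  ultimately show "is_glb (D ` ?P) (D t)" unfolding is_glb_def by blast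
qed

lemma branch_max_imm_succs_empty:
  assumes "t \<in> B" and "\<forall>u\<in>B. prefix u t"
  shows "imm_succs nodes prefix t = {}"
proof (rule ccontr)
  assume "imm_succs nodes prefix t \<noteq> {}"
  then obtain c where c: "c \<in> nodes" "prefix t c" "c \<noteq> t" unfolding imm_succs_def by blast
  then have "c \<in> B" using branch_insert_comparable assms(2) prefix_trans by blast
  then show False using c assms(2) prefix_antisym by blast
qed

lemma branch_order_less_if_max:
  assumes t: "t \<in> B" and max: "\<forall>u\<in>B. prefix u t"
  shows "branch_order prefix B <o kap"
proof -
  obtain \<alpha> where tn: "node t \<alpha>" using branch_node t by blast
  have "B = trunc t ` under \<alpha>"
  proof
    show "B \<subseteq> trunc t ` under \<alpha>"
      using prefix_of_node[OF tn] branch_subset_nodes max by (fastforce simp: under_def)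
    show "trunc t ` under \<alpha> \<subseteq> B"
    proof
      fix u assume "u \<in> trunc t ` under \<alpha>"
      then obtain \<beta> where "(\<beta>, \<alpha>) \<in> kap" "u = trunc t \<beta>" by (auto simp: under_def)
      then show "u \<in> B"
        using branch_downward_closed[OF t nodesI[OF node_trunc[OF tn]] prefix_trunc[OF tn]] by simp
    qed
  qed
  then have "branch_order prefix B =o Restr kap (under \<alpha>)"
    using trunc_image_ordIso[OF tn] ordIso_symmetric by simp
  then show ?thesis using Restr_under_ordLess[OF node_in_Field[OF tn]] by (rule ordIso_ordLess_trans)
qed

lemma branch_union_eq: "t \<in> B \<Longrightarrow> t \<beta> \<noteq> none \<Longrightarrow> branch_union B \<beta> = t \<beta>"
proof -
  assume t: "t \<in> B" "t \<beta> \<noteq> none"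
  let ?t = "SOME t. t \<in> B \<and> t \<beta> \<noteq> none"
  have "?t \<in> B \<and> ?t \<beta> \<noteq> none" by (rule someI[of _ t]) (use t in blast)
  moreover from this have "prefix ?t t \<or> prefix t ?t" using branch_chain t(1) by blast
  ultimately have "?t \<beta> = t \<beta>" using t(2) unfolding prefix_def by auto
  then show ?thesis unfolding branch_union_def using t by auto
qed

lemma prefix_branch_union: "t \<in> B \<Longrightarrow> prefix t (branch_union B)"
  unfolding prefix_def using branch_union_eq by blast

lemma node_branch_union:
  assumes \<gamma>: "\<gamma> \<in> Field kap"
    and least: "\<And>\<beta>. \<beta> \<in> Field kap \<Longrightarrow> (\<forall>t\<in>B. t \<beta> = none) \<longleftrightarrow> (\<gamma>, \<beta>) \<in> kap"
  shows "node (branch_union B) \<gamma>"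
proof -
  have defined: "branch_union B \<beta> \<noteq> none \<longleftrightarrow> \<beta> \<in> underS \<gamma>" for \<beta>
  proof
    assume "branch_union B \<beta> \<noteq> none"
    then obtain t where t: "t \<in> B" "t \<beta> \<noteq> none" unfolding branch_union_def by (auto split: if_splits)
    obtain \<alpha> where "node t \<alpha>" using branch_node t(1) by blast
    then have "\<beta> \<in> underS \<alpha>" using t(2) node_defined_iff by blast
    then have "\<beta> \<in> Field kap" by (auto simp: underS_def intro: FieldI1)
    moreover have "(\<gamma>, \<beta>) \<notin> kap" using least[OF \<open>\<beta> \<in> Field kap\<close>] t by blast
    ultimately show "\<beta> \<in> underS \<gamma>" using above_if_not_underS[OF _ \<gamma>] by blast
  next
    assume \<beta>: "\<beta> \<in> underS \<gamma>"
    then have "\<beta> \<in> Field kap" "(\<gamma>, \<beta>) \<notin> kap" using rel_antisym by (auto simp: underS_def intro: FieldI1)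
    then obtain t where "t \<in> B" "t \<beta> \<noteq> none" using least[of \<beta>] by blast
    then show "branch_union B \<beta> \<noteq> none" using branch_union_eq by simp
  qed
  have "\<not> D (trunc (branch_union B) \<beta>) \<le> b \<and> admissible (trunc (branch_union B) \<beta>) \<beta> (branch_union B \<beta>)"
    if "\<beta> \<in> underS \<gamma>" for \<beta>
  proof -
    have "branch_union B \<beta> \<noteq> none" using defined that by blast
    then obtain t where t: "t \<in> B" "t \<beta> \<noteq> none" unfolding branch_union_def by (auto split: if_splits)
    then have "branch_union B \<beta> = t \<beta>" by (rule branch_union_eq)
    obtain \<alpha> where tn: "node t \<alpha>" using branch_node t(1) by blast
    have \<beta>\<alpha>: "\<beta> \<in> underS \<alpha>" using tn t(2) node_defined_iff by blast
    have "trunc (branch_union B) \<beta> = trunc t \<beta>"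
    proof
      fix \<delta> show "trunc (branch_union B) \<beta> \<delta> = trunc t \<beta> \<delta>"
      proof (cases "\<delta> \<in> underS \<beta>")
        case True
        then have "\<delta> \<in> underS \<alpha>" using \<beta>\<alpha> underS_under_trans mem_underS_iff by blast
        then have "t \<delta> \<noteq> none" using tn node_defined_iff by blast
        then show ?thesis using True branch_union_eq t(1) by (simp add: trunc_def)
      qed (simp add: trunc_def)
    qed
    then show ?thesis using tn \<beta>\<alpha> \<open>branch_union B \<beta> = t \<beta>\<close> unfolding node_def by simp
  qed
  then show ?thesis unfolding node_def using \<gamma> defined by blast
qed

context
  assumes no_max: "\<forall>t\<in>B. \<exists>u\<in>B. \<not> prefix u t"
begin

text \<open>An unreached position would make the union of \<open>B\<close> a node extending every member
  of \<open>B\<close>, hence by maximality a largest element of \<open>B\<close>.\<close>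

lemma branch_covers: "\<alpha> \<in> Field kap \<Longrightarrow> \<exists>t\<in>B. t \<alpha> \<noteq> none"
proof (rule ccontr)
  let ?U = "{\<beta>\<in>Field kap. \<forall>t\<in>B. t \<beta> = none}"
  assume "\<alpha> \<in> Field kap" "\<not> (\<exists>t\<in>B. t \<alpha> \<noteq> none)"
  then have "?U \<noteq> {}" by blast
  then obtain \<gamma> where \<gamma>: "\<gamma> \<in> ?U" and \<gamma>_least: "\<forall>\<beta>\<in>?U. (\<gamma>, \<beta>) \<in> kap"
    using exists_least[of ?U] by blast
  have least: "(\<forall>t\<in>B. t \<beta> = none) \<longleftrightarrow> (\<gamma>, \<beta>) \<in> kap" if \<beta>: "\<beta> \<in> Field kap" for \<beta>
  proof
    assume "(\<gamma>, \<beta>) \<in> kap"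
    show "\<forall>t\<in>B. t \<beta> = none"
    proof
      fix t assume "t \<in> B"
      then obtain \<alpha>' where tn: "node t \<alpha>'" using branch_node by blast
      have "\<gamma> \<notin> underS \<alpha>'" using tn \<gamma> \<open>t \<in> B\<close> node_defined_iff by blast
      then have "\<beta> \<notin> underS \<alpha>'" using under_underS_trans \<open>(\<gamma>, \<beta>) \<in> kap\<close> by blast
      then show "t \<beta> = none" using tn node_defined_iff by blast
    qed
  qed (use \<gamma>_least \<beta> in blast)
  have "\<gamma> \<in> Field kap" using \<gamma> by blast
  then have "branch_union B \<in> nodes" using nodesI node_branch_union least by blast
  moreover have "\<forall>t\<in>B. prefix t (branch_union B) \<or> prefix (branch_union B) t" using prefix_branch_union by blast
  ultimately have "branch_union B \<in> B" by (rule branch_insert_comparable)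
  then show False using no_max prefix_branch_union by blast
qed

lemma a_in_branch_filter: "a \<in> branch_filter B"
proof -
  obtain \<alpha> where "\<alpha> \<in> Field kap" using infinite_kap by (metis finite.emptyI ex_in_conv)
  then obtain t where "t \<in> B" using branch_covers by blast
  then show ?thesis unfolding branch_filter_def using D_le_a branch_node by blast
qed

lemma b_notin_branch_filter: "b \<notin> branch_filter B"
proof
  assume "b \<in> branch_filter B"
  then obtain t where t: "t \<in> B" "D t \<le> b" unfolding branch_filter_def by blast
  then obtain u where u: "u \<in> B" "\<not> prefix u t" using no_max by blast
  then have tu: "prefix t u" "u \<noteq> t" using branch_chain t prefix_refl by blast+
  obtain \<alpha> \<alpha>' where tn: "node t \<alpha>" and un: "node u \<alpha>'" using branch_node t u by blast
  have "(\<alpha>, \<alpha>') \<in> kap" "trunc u \<alpha> = t" using prefix_iff_trunc[OF tn un] tu by blast+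
  moreover have "\<alpha> \<noteq> \<alpha>'" using trunc_height[OF un] \<open>trunc u \<alpha> = t\<close> tu(2) by auto
  ultimately have "\<alpha> \<in> underS \<alpha>'" by (simp add: underS_def)
  then show False using un t \<open>trunc u \<alpha> = t\<close> unfolding node_def by blast
qed

lemma branch_filter_upward: "x \<in> branch_filter B \<Longrightarrow> x \<le> y \<Longrightarrow> y \<in> branch_filter B"
  unfolding branch_filter_def using order.trans by blast

lemma branch_filter_small_meets:
  assumes S: "|S| <o kap" "S \<subseteq> branch_filter B" and m: "is_glb S m"
  shows "m \<in> branch_filter B"
proof -
  define ts where "ts s = (SOME t. t \<in> B \<and> D t \<le> s)" for s
  have ts: "ts s \<in> B \<and> D (ts s) \<le> s" if "s \<in> S" for s
  proof -
    have "\<exists>t. t \<in> B \<and> D t \<le> s" using that S(2) unfolding branch_filter_def by blast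
    then show ?thesis unfolding ts_def by (rule someI_ex)
  qed
  define ht where "ht s = (SOME \<beta>. node (ts s) \<beta>)" for s
  have ht: "node (ts s) (ht s)" if "s \<in> S" for s
    unfolding ht_def using ts that branch_node by (metis someI_ex)
  have "ht ` S \<subseteq> Field kap" using ht node_in_Field by blast
  moreover have "|ht ` S| <o kap" using card_of_image S(1) by (rule ordLeq_ordLess_trans)
  ultimately have "\<exists>\<gamma>\<in>Field kap. \<forall>\<beta>\<in>ht ` S. (\<beta>, \<gamma>) \<in> kap"
    by (rule regularCard_small_bounded[OF regular_kap])
  then obtain \<gamma> where \<gamma>: "\<gamma> \<in> Field kap" "\<forall>\<beta>\<in>ht ` S. (\<beta>, \<gamma>) \<in> kap" by blast
  then have ht_below: "(ht s, \<gamma>) \<in> kap" if "s \<in> S" for s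
    using that by blast
  obtain t where t: "t \<in> B" "t \<gamma> \<noteq> none" using branch_covers \<gamma>(1) by blast
  obtain \<alpha> where tn: "node t \<alpha>" using branch_node t(1) by blast
  have \<gamma>\<alpha>: "\<gamma> \<in> underS \<alpha>" using tn t(2) node_defined_iff by blast
  have "D t \<le> s" if s: "s \<in> S" for s
  proof -
    have "prefix (ts s) t"
    proof (rule ccontr)
      assume "\<not> prefix (ts s) t"
      then have "prefix t (ts s)" using branch_chain t(1) ts s by blast
      then have "(\<alpha>, ht s) \<in> kap" using prefix_iff_trunc[OF tn ht[OF s]] by blast
      then have "(\<alpha>, \<gamma>) \<in> kap" using ht_below s rel_trans by blast
      then show False using \<gamma>\<alpha> rel_antisym by (auto simp: underS_def)
    qed
    then have "D t \<le> D (ts s)" using D_antimono[OF ht[OF s] tn] by blast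
    then show "D t \<le> s" using ts s by (meson order.trans)
  qed
  then have "D t \<le> m" using m unfolding is_glb_def by blast
  then show ?thesis unfolding branch_filter_def using t(1) by blast
qed

lemma branch_filter_prime:
  assumes i: "i \<in> Field kap" and j: "is_lub (A i) j" "j \<in> branch_filter B"
  shows "\<exists>x\<in>A i. x \<in> branch_filter B"
proof -
  obtain t where t: "t \<in> B" "D t \<le> j" using j(2) unfolding branch_filter_def by blast
  obtain \<alpha> where tn: "node t \<alpha>" using branch_node t(1) by blast
  obtain \<beta> where \<beta>: "\<beta> \<in> Field kap" "(\<alpha>, \<beta>) \<in> kap" "task \<beta> = i"
    using task_cofinal i node_in_Field[OF tn] by blast
  obtain t' where t': "t' \<in> B" "t' \<beta> \<noteq> none" using branch_covers \<beta>(1) by blast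
  obtain \<alpha>' where tn': "node t' \<alpha>'" using branch_node t'(1) by blast
  have \<beta>\<alpha>': "\<beta> \<in> underS \<alpha>'" using tn' t'(2) node_defined_iff by blast
  have "prefix t t'"
  proof (rule ccontr)
    assume "\<not> prefix t t'"
    then have "prefix t' t" using branch_chain t(1) t'(1) by blast
    then have "(\<alpha>', \<alpha>) \<in> kap" using prefix_iff_trunc[OF tn' tn] by blast
    then have "(\<alpha>', \<beta>) \<in> kap" using \<beta>(2) rel_trans by blast
    then show False using \<beta>\<alpha>' rel_antisym by (auto simp: underS_def)
  qed
  then have "trunc t' \<alpha> = t" using prefix_iff_trunc[OF tn tn'] by blast
  let ?s = "trunc t' \<beta>"
  have sn: "node ?s \<beta>" using node_trunc[OF tn'] \<beta>\<alpha>' by (simp add: underS_def)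
  have "prefix t ?s" using prefix_iff_trunc[OF tn sn] \<beta>(2) \<open>trunc t' \<alpha> = t\<close> trunc_trunc by metis
  then have "D ?s \<le> j" using D_antimono[OF tn sn] t(2) by (meson order.trans)
  then have "below_join (D ?s) i" unfolding below_join_def using j(1) by blast
  moreover have "admissible ?s \<beta> (t' \<beta>)" using tn' \<beta>\<alpha>' unfolding node_def by blast
  ultimately obtain x where x: "x \<in> A i" "t' \<beta> = code i x" unfolding admissible_def using \<beta>(3) by auto
  then have "x \<in> chosen t'" unfolding chosen_def using \<beta> by blast
  then have "D t' \<le> x" using D_le_chosen[OF tn'] by blast
  then show ?thesis using x(1) t'(1) unfolding branch_filter_def by blast
qed

lemma complete_prime_filter_branch_filter: "complete_prime_filter kap A (branch_filter B)"
  unfolding complete_prime_filter_def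
proof (intro conjI allI impI ballI)
  show "y \<in> branch_filter B" if "x \<in> branch_filter B \<and> x \<le> y" for x y
    using branch_filter_upward that by blast
  show "m \<in> branch_filter B" if "|S| <o kap \<and> S \<subseteq> branch_filter B \<and> is_glb S m" for S m
    using branch_filter_small_meets that by blast
  show "\<exists>x\<in>A i. x \<in> branch_filter B" if "i \<in> Field kap" "is_lub (A i) j \<and> j \<in> branch_filter B" for i j
    using branch_filter_prime that by blast
qed

end

end

lemma leaf_D_le_b:
  assumes t: "node t \<alpha>" and "imm_succs nodes prefix t = {}"
  shows "D t \<le> b"
proof (rule ccontr)
  assume nb: "\<not> D t \<le> b"
  have "\<exists>v. admissible t \<alpha> v"
  proof (cases "below_join (D t) (task \<alpha>)")
    case True
    then obtain j where j: "is_lub (A (task \<alpha>)) j" "D t \<le> j" using below_join_def by blast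
    have "A (task \<alpha>) \<noteq> {}"
    proof
      assume "A (task \<alpha>) = {}"
      then have "j \<le> b" using j unfolding is_lub_def by simp
      then show False using j nb by (meson order.trans)
    qed
    then show ?thesis using True unfolding admissible_def by auto
  next
    case False
    then show ?thesis unfolding admissible_def by auto
  qed
  then show False using imm_succs_node[OF t] assms(2) nb by blast
qed

lemma exists_branch_without_max: "\<exists>B. is_branch nodes prefix B \<and> (\<forall>t\<in>B. \<exists>u\<in>B. \<not> prefix u t)"
proof (rule ccontr)
  assume "\<not> ?thesis"
  then have allmax: "\<forall>B. is_branch nodes prefix B \<longrightarrow> (\<exists>t\<in>B. \<forall>u\<in>B. prefix u t)" by blast
  have cc: "cotree_condition lam kap TYPE('a)" using coherent coherent_def by blast
  have ante: "is_cotree nodes prefix root D \<and>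
        (\<forall>t\<in>nodes. imm_succs nodes prefix t \<noteq> {} \<longrightarrow>
            extremal_epi_family (D t) (D ` imm_succs nodes prefix t) \<and> |imm_succs nodes prefix t| <o lam) \<and>
        (\<forall>B. is_branch nodes prefix B \<longrightarrow> branch_order prefix B <o kap) \<and>
        (\<forall>B. is_branch nodes prefix B \<longrightarrow> continuous_branch prefix D B)"
    using is_cotree_nodes imm_succs_extremal branch_order_less_if_max branch_continuous allmax nodesI nodesD by blast
  have ext: "extremal_epi_family (D root) {m. \<exists>B. is_branch nodes prefix B \<and> is_glb (D ` B) m}"
    using cc ante unfolding cotree_condition_def by blast
  have "\<forall>m\<in>{m. \<exists>B. is_branch nodes prefix B \<and> is_glb (D ` B) m}. m \<le> inf a b"
  proof
    fix m assume "m \<in> {m. \<exists>B. is_branch nodes prefix B \<and> is_glb (D ` B) m}"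
    then obtain B where B: "is_branch nodes prefix B" "is_glb (D ` B) m" by blast
    then obtain t where t: "t \<in> B" "\<forall>u\<in>B. prefix u t" using allmax by blast
    obtain \<alpha> where tn: "node t \<alpha>" using t branch_subset_nodes[OF B(1)] nodesD by blast
    have "D t \<le> b" using leaf_D_le_b[OF tn branch_max_imm_succs_empty[OF B(1) t]] .
    moreover have "D t \<le> a" using D_le_a tn by blast
    moreover have "m \<le> D t" using B(2) t unfolding is_glb_def by blast
    ultimately show "m \<le> inf a b" by (meson le_inf_iff order.trans)
  qed
  then have "inf a b = a" using ext D_root unfolding extremal_epi_family_def by simp
  then show False using a_not_le_b by (metis inf.absorb_iff1)
qed

lemma exists_separating_filter: "\<exists>F. complete_prime_filter kap A F \<and> a \<in> F \<and> b \<notin> F"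
proof -
  obtain B where "is_branch nodes prefix B" "\<forall>t\<in>B. \<exists>u\<in>B. \<not> prefix u t"
    using exists_branch_without_max by blast
  then show ?thesis
    using complete_prime_filter_branch_filter a_in_branch_filter b_notin_branch_filter by blast
qed

end

section \<open>The representation\<close>

lemma separating_filter_exists:
  fixes lam :: "'l rel" and kap :: "'k rel" and A :: "'k \<Rightarrow> 'a::distrib_lattice set"
  assumes lam: "regular_infinite_cardinal lam" and kap: "regular_infinite_cardinal kap"
    and coherent: "coherent lam kap TYPE('a)" and small_A: "\<forall>i\<in>Field kap. |A i| <o lam"
    and "\<not> x \<le> y"
  shows "\<exists>F. complete_prime_filter kap A F \<and> x \<in> F \<and> y \<notin> F"
proof -
  have kap': "Card_order kap" "infinite (Field kap)" "regularCard kap"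
    and lam': "Card_order lam" "infinite (Field lam)"
    using kap lam unfolding regular_infinite_cardinal_def by blast+
  have "infinite (UNIV :: 'l set)" using infinite_super[OF subset_UNIV lam'(2)] .
  then obtain none skip :: 'l where none_skip: "none \<noteq> skip"
    using ex_new_if_finite[of "{undefined}"] by blast
  have "\<forall>i\<in>Field kap. \<exists>g. inj_on g (A i) \<and> g ` A i \<inter> {none, skip} = {}"
  proof
    fix i assume "i \<in> Field kap"
    then have "|A i| <o lam" using small_A by blast
    then show "\<exists>g. inj_on g (A i) \<and> g ` A i \<inter> {none, skip} = {}"
      using inj_on_avoiding_finite[OF lam', of "A i" "{none, skip}"] by simp
  qed
  then have "\<exists>code. \<forall>i\<in>Field kap. inj_on (code i) (A i) \<and> code i ` A i \<inter> {none, skip} = {}"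
    by (rule bchoice)
  then obtain code where code: "\<forall>i\<in>Field kap. inj_on (code i) (A i) \<and> code i ` A i \<inter> {none, skip} = {}"
    by blast
  then have code': "\<forall>i\<in>Field kap. inj_on (code i) (A i) \<and> none \<notin> code i ` A i \<and> skip \<notin> code i ` A i"
    by blast
  have wo: "wo_rel kap" using kap'(1) card_order_on_well_order_on wo_rel_def by blast
  obtain task where task: "\<forall>\<beta>\<in>Field kap. task \<beta> \<in> Field kap"
    "\<forall>i\<in>Field kap. \<forall>\<delta>\<in>Field kap. \<exists>\<beta>\<in>Field kap. (\<delta>, \<beta>) \<in> kap \<and> task \<beta> = i"
    using wo_rel.exists_cofinal_enumeration[OF wo kap'(1,2)] by blast
  interpret separation_tree kap lam A none skip code task x y
    by (intro separation_tree.intro separation_tree_axioms.intro wo kap' lam' coherent small_A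
        none_skip code' task \<open>\<not> x \<le> y\<close>)
  show ?thesis by (rule exists_separating_filter)
qed

lemma representation_by_filters:
  fixes kap :: "'k rel" and A :: "'k \<Rightarrow> 'a::order set"
  assumes sep: "\<And>x y. \<not> x \<le> y \<Longrightarrow> \<exists>F. complete_prime_filter kap A F \<and> x \<in> F \<and> y \<notin> F"
  shows "\<exists>(X :: 'a set set) (f :: 'a \<Rightarrow> 'a set set).
           (\<forall>a. f a \<subseteq> X) \<and> inj f \<and> mono f \<and>
           (\<forall>S m. (card_of S, kap) \<in> ordLess \<and> is_glb S m \<longrightarrow> f m = X \<inter> \<Inter> (f ` S)) \<and>
           (\<forall>i\<in>Field kap. \<forall>j. is_lub (A i) j \<longrightarrow> f j = \<Union> (f ` A i))"
proof (intro exI conjI)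
  let ?X = "{F. complete_prime_filter kap A F}"
  let ?f = "\<lambda>x. {F\<in>?X. x \<in> F}"
  show "\<forall>x. ?f x \<subseteq> ?X" by blast
  show "inj ?f"
  proof (rule injI)
    fix x y assume eq: "?f x = ?f y"
    have "x \<le> y" using sep[of x y] eq by blast
    moreover have "y \<le> x" using sep[of y x] eq by blast
    ultimately show "x = y" by simp
  qed
  show "mono ?f" unfolding mono_def complete_prime_filter_def by blast
  show "\<forall>S m. |S| <o kap \<and> is_glb S m \<longrightarrow> ?f m = ?X \<inter> \<Inter> (?f ` S)"
    unfolding complete_prime_filter_def is_glb_def by blast
  show "\<forall>i\<in>Field kap. \<forall>j. is_lub (A i) j \<longrightarrow> ?f j = \<Union> (?f ` A i)"
    unfolding complete_prime_filter_def is_lub_def by blast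
qed

theorem mainTheorem5:
  fixes lam :: "'l rel" and kap :: "'k rel" and A :: "'k \<Rightarrow> 'a::distrib_lattice set"
  assumes "regular_infinite_cardinal lam" and "regular_infinite_cardinal kap"
    and "(kap, lam) \<in> ordLeq"
    and "coherent lam kap TYPE('a)"
    and "\<forall>i\<in>Field kap. (card_of (A i), lam) \<in> ordLess"
  shows "\<exists>(X :: 'a set set) (f :: 'a \<Rightarrow> 'a set set).
           (\<forall>a. f a \<subseteq> X) \<and> inj f \<and> mono f \<and>
           (\<forall>S m. (card_of S, kap) \<in> ordLess \<and> is_glb S m \<longrightarrow> f m = X \<inter> \<Inter> (f ` S)) \<and>
           (\<forall>i\<in>Field kap. \<forall>j. is_lub (A i) j \<longrightarrow> f j = \<Union> (f ` A i))"
  using separating_filter_exists[OF assms(1,2,4,5)] by (rule representation_by_filters)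

end
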